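(* Let $n\ge2$, $\alpha\in(-n,0)$ and let $\phi$ be a Young function satisfying $\underline\Lambda_\phi(\alpha)<\infty$ and $\overline\Lambda_\phi(\alpha)<\infty$. Then there exists a constant $C>0$ depending on $n,\alpha,\phi$ such that for any domain $\Omega\subset\mathbb R^n$, any $x\in\Omega$ and any $0<r<t<\frac12\operatorname{diam}\Omega$, the function $u_{x,r,t}$ belongs to $\dot{\mathbf B}^{\alpha,\phi}(\Omega)$ and $$\|u_{x,r,t}\|_{\dot{\mathbf B}^{\alpha,\phi}(\Omega)}\le C(t-r)^{-\alpha}\Big[\phi^{-1}\Big(\frac{(t-r)^n}{|B_\Omega(x,t)|}\Big)\Big]^{-1}.$$
   Context: A Young function is $\phi\in C([0,\infty))$, convex, with $\phi(0)=0$, $\phi(t)>0$ for $t>0$, $\lim_{t\to\infty}\phi(t)=\infty$; $\phi^{-1}$ is its inverse function on $[0,\infty)$. $\underline\Lambda_\phi(\alpha):=\sup_{x>0}\int_0^1\frac{\phi(t^{1-\alpha}x)}{\phi(x)}\frac{dt}{t^{n+1}}$, $\overline\Lambda_\phi(\alpha):=\sup_{x>0}\int_1^\infty\frac{\phi(t^{-\alpha}x)}{\phi(x)}\frac{dt}{t^{n+1}}$. $\dot{\mathbf B}^{\alpha,\phi}(\Omega)$ is the space of measurable $u$ on $\Omega$ with finite $\|u\|_{\dot{\mathbf B}^{\alpha,\phi}(\Omega)}:=\inf\{\lambda>0:\int_\Omega\int_\Omega\phi(\frac{|u(x)-u(y)|}{\lambda|x-y|^{\alpha}})\frac{dx\,dy}{|x-y|^{2n}}\le1\}$.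 $B_\Omega(x,s):=\Omega\cap B(x,s)$. For $x\in\Omega$ and $0<r<t$, $u_{x,r,t}:\Omega\to\mathbb R$ is defined by $u_{x,r,t}(z)=1$ for $z\in B_\Omega(x,r)$, $u_{x,r,t}(z)=\frac{t-|x-z|}{t-r}$ for $z\in B_\Omega(x,t)\setminus B_\Omega(x,r)$, and $u_{x,r,t}(z)=0$ for $z\in\Omega\setminus B_\Omega(x,t)$. *)

theory Defs
  imports "HOL-Analysis.Analysis"
begin

text \<open>Young function (only its values on [0,\<infinity>) matter).\<close>
definition young_function :: "(real \<Rightarrow> real) \<Rightarrow> bool" where
  "young_function \<phi> \<longleftrightarrow>
     continuous_on {0..} \<phi> \<and> convex_on {0..} \<phi> \<and> \<phi> 0 = 0 \<and>
     (\<forall>t>0. \<phi> t > 0) \<and> filterlim \<phi> at_top at_top"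

definition young_inv :: "(real \<Rightarrow> real) \<Rightarrow> real \<Rightarrow> real" where
  "young_inv \<phi> s = (THE t. t \<ge> 0 \<and> \<phi> t = s)"

definition Lambda_lower :: "nat \<Rightarrow> (real \<Rightarrow> real) \<Rightarrow> real \<Rightarrow> ennreal" where
  "Lambda_lower n \<phi> \<alpha> =
     (SUP x\<in>{0<..}. \<integral>\<^sup>+ t\<in>{0<..1}. ennreal (\<phi> (t powr (1 - \<alpha>) * x) / \<phi> x / t ^ (n + 1)) \<partial>lborel)"

definition Lambda_upper :: "nat \<Rightarrow> (real \<Rightarrow> real) \<Rightarrow> real \<Rightarrow> ennreal" where
  "Lambda_upper n \<phi> \<alpha> =
     (SUP x\<in>{0<..}. \<integral>\<^sup>+ t\<in>{1..}. ennreal (\<phi> (t powr (- \<alpha>) * x) / \<phi> x / t ^ (n + 1)) \<partial>lborel)"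

definition besov_energy ::
  "real \<Rightarrow> (real \<Rightarrow> real) \<Rightarrow> ('a::euclidean_space) set \<Rightarrow> ('a \<Rightarrow> real) \<Rightarrow> real \<Rightarrow> ennreal" where
  "besov_energy \<alpha> \<phi> \<Omega> u lam =
     (\<integral>\<^sup>+ x\<in>\<Omega>. (\<integral>\<^sup>+ y\<in>\<Omega>.
        ennreal (\<phi> (\<bar>u x - u y\<bar> / (lam * dist x y powr \<alpha>)) / dist x y ^ (2 * DIM('a)))
      \<partial>lebesgue) \<partial>lebesgue)"

definition besov_norm ::
  "real \<Rightarrow> (real \<Rightarrow> real) \<Rightarrow> ('a::euclidean_space) set \<Rightarrow> ('a \<Rightarrow> real) \<Rightarrow> real" where
  "besov_norm \<alpha> \<phi> \<Omega> u = Inf {lam. lam > 0 \<and> besov_energy \<alpha> \<phi> \<Omega> u lam \<le> 1}"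

definition in_besov ::
  "real \<Rightarrow> (real \<Rightarrow> real) \<Rightarrow> ('a::euclidean_space) set \<Rightarrow> ('a \<Rightarrow> real) \<Rightarrow> bool" where
  "in_besov \<alpha> \<phi> \<Omega> u \<longleftrightarrow> u \<in> borel_measurable (lebesgue_on \<Omega>) \<and>
     (\<exists>lam>0. besov_energy \<alpha> \<phi> \<Omega> u lam \<le> 1)"

text \<open>The cut-off function u_{x,r,t} (values outside \<Omega> are irrelevant; set to 0).\<close>
definition cutoff :: "('a::euclidean_space) set \<Rightarrow> 'a \<Rightarrow> real \<Rightarrow> real \<Rightarrow> 'a \<Rightarrow> real" where
  "cutoff \<Omega> x r t z =
     (if z \<in> \<Omega> \<inter> ball x r then 1
      else if z \<in> \<Omega> \<inter> ball x t then (t - dist x z) / (t - r)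
      else 0)"

end

theory Submission
  imports Defs "HOL-Probability.Probability_Measure"
begin

text \<open>
  On \<Omega> the cut-off function u is the clamp of (t - |x - z|)/(t - r) to [0, 1], so
  |u z - u w| \<le> min 1 (|z - w|/s) with s = t - r, and u vanishes off B = B_\<Omega>(x, t). Hence a pair
  (z, w) contributes to the energy only if z \<in> B or w \<in> B, and by translation invariance the
  energy at level \<lambda> is at most 2|B| \<integral> \<phi>(min 1 (|h|/s) |h|^(-\<alpha>)/\<lambda>) |h|^(-2n) dh.
  Polar coordinates and the substitution |h| = s\<tau> bound this integral by
  n \<omega>_n s^(-n) \<phi>(s^(-\<alpha>)/\<lambda>) (\<Lambda>_lower + \<Lambda>_upper), where \<omega>_n is the volume of the unit ball.
  For \<lambda> = C s^(-\<alpha>)/\<phi>^-1(s^n/|B|) convexity gives \<phi>(s^(-\<alpha>)/\<lambda>) \<le> s^n/(C |B|), so the energy is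
  at most 2 n \<omega>_n (\<Lambda>_lower + \<Lambda>_upper)/C, which is \<le> 1 for C large.
\<close>

section \<open>Young functions\<close>

lemma young_function_scale:
  assumes "young_function \<phi>" "0 \<le> c" "c \<le> 1" "0 \<le> s"
  shows "\<phi> (c * s) \<le> c * \<phi> s"
proof -
  have "convex_on {0..} \<phi>" "\<phi> 0 = 0"
    using assms(1) by (auto simp: young_function_def)
  then have "\<phi> ((1 - c) *\<^sub>R 0 + c *\<^sub>R s) \<le> (1 - c) * \<phi> 0 + c * \<phi> s"
    by (intro convex_onD) (use assms in auto)
  then show ?thesis
    using \<open>\<phi> 0 = 0\<close> by simp
qed

lemma young_function_nonneg:
  assumes "young_function \<phi>" "0 \<le> a"
  shows "0 \<le> \<phi> a"
  using assms unfolding young_function_def by (cases "a = 0") (auto simp: less_imp_le)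

lemma young_function_mono:
  assumes "young_function \<phi>" "0 \<le> a" "a \<le> b"
  shows "\<phi> a \<le> \<phi> b"
proof (cases "b = 0")
  case True
  then show ?thesis using assms by simp
next
  case False
  then have "b > 0" using assms by simp
  have "\<phi> a = \<phi> ((a / b) * b)" using \<open>b > 0\<close> by simp
  also have "\<dots> \<le> (a / b) * \<phi> b" using assms \<open>b > 0\<close> by (intro young_function_scale) auto
  also have "\<dots> \<le> \<phi> b"
    using assms \<open>b > 0\<close> young_function_nonneg[OF assms(1), of b]
    by (simp add: divide_le_eq mult.commute mult_right_mono)
  finally show ?thesis .
qed

lemma young_function_strict_mono:
  assumes "young_function \<phi>" "0 \<le> a" "a < b"
  shows "\<phi> a < \<phi> b"
proof (cases "a = 0")
  case True
  then show ?thesis using assms unfolding young_function_def by auto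
next
  case False
  then have "b > 0" "\<phi> b > 0" using assms unfolding young_function_def by auto
  have "\<phi> a = \<phi> ((a / b) * b)" using \<open>b > 0\<close> by simp
  also have "\<dots> \<le> (a / b) * \<phi> b" using assms \<open>b > 0\<close> by (intro young_function_scale) auto
  also have "\<dots> < \<phi> b" using assms \<open>b > 0\<close> \<open>\<phi> b > 0\<close> by (simp add: field_simps)
  finally show ?thesis .
qed

lemma young_inv:
  assumes young: "young_function \<phi>" and "0 \<le> s"
  shows "0 \<le> young_inv \<phi> s" "\<phi> (young_inv \<phi> s) = s"
proof -
  have cont: "continuous_on {0..} \<phi>" and "\<phi> 0 = 0" and "filterlim \<phi> at_top at_top"
    using young by (auto simp: young_function_def)
  then obtain N where N: "\<And>x. x \<ge> N \<Longrightarrow> s \<le> \<phi> x"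
    by (auto simp: filterlim_at_top eventually_at_top_linorder)
  have "\<exists>x. 0 \<le> x \<and> x \<le> max N 0 \<and> \<phi> x = s"
    by (rule IVT') (use \<open>\<phi> 0 = 0\<close> \<open>0 \<le> s\<close> N[of "max N 0"] in
      \<open>auto intro: continuous_on_subset[OF cont]\<close>)
  then obtain x where x: "0 \<le> x" "\<phi> x = s" by auto
  have "young_inv \<phi> s = x"
    unfolding young_inv_def
  proof (rule the_equality)
    fix y assume y: "0 \<le> y \<and> \<phi> y = s"
    show "y = x"
      using young_function_strict_mono[OF young] x y by (metis linorder_neqE_linordered_idom less_irrefl)
  qed (use x in auto)
  with x show "0 \<le> young_inv \<phi> s" "\<phi> (young_inv \<phi> s) = s" by simp_all
qed

lemma young_inv_pos:
  assumes "young_function \<phi>" "0 < s"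
  shows "0 < young_inv \<phi> s"
  using young_inv[OF assms(1), of s] assms unfolding young_function_def
  by (metis less_eq_real_def less_irrefl)

text \<open>\<phi> is only assumed continuous on [0, \<infinity>); clamping its argument gives a Borel function on \<real>.\<close>

definition young_ext :: "(real \<Rightarrow> real) \<Rightarrow> real \<Rightarrow> real" where
  "young_ext \<phi> v = \<phi> (max 0 v)"

lemma young_ext_eq [simp]: "0 \<le> v \<Longrightarrow> young_ext \<phi> v = \<phi> v"
  by (simp add: young_ext_def)

lemma young_ext_nonneg: "young_function \<phi> \<Longrightarrow> 0 \<le> young_ext \<phi> v"
  unfolding young_ext_def by (rule young_function_nonneg) auto

lemma borel_measurable_young_ext [measurable]:
  assumes "young_function \<phi>"
  shows "young_ext \<phi> \<in> borel_measurable borel"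
proof -
  have "continuous_on {0..} \<phi>" using assms by (simp add: young_function_def)
  then have "continuous_on UNIV (\<lambda>v. \<phi> (max 0 v))"
    by (rule continuous_on_compose2) (auto intro!: continuous_intros)
  then show ?thesis unfolding young_ext_def by (rule borel_measurable_continuous_onI)
qed

section \<open>Radial integrals\<close>

lemma distributed_norm_lborel:
  "distributed (lborel :: ('a::euclidean_space) measure) lborel norm
     (\<lambda>\<rho>. ennreal (indicator {0..} \<rho> * (real DIM('a) * unit_ball_vol (real DIM('a)) * \<rho> ^ (DIM('a) - 1))))"
proof (rule distributedI_borel_atMost[where
    g = "\<lambda>a. if a \<ge> 0 then unit_ball_vol (real DIM('a)) * a ^ DIM('a) else 0"])
  fix a :: real
  show "emeasure lborel {x \<in> space lborel. norm (x::'a) \<le> a} =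
        ennreal (if a \<ge> 0 then unit_ball_vol (real DIM('a)) * a ^ DIM('a) else 0)"
  proof (cases "a \<ge> 0")
    case True
    have "{x \<in> space lborel. norm (x::'a) \<le> a} = cball 0 a" by (auto simp: cball_def)
    then show ?thesis using True emeasure_cball[of a 0] by simp
  next
    case False
    then have "{x \<in> space lborel. norm (x::'a) \<le> a} = {}"
      by (auto dest: order_trans[OF norm_ge_zero])
    then show ?thesis using False by simp
  qed
  show "(\<integral>\<^sup>+ x. ennreal (indicator {0..} x * (real DIM('a) * unit_ball_vol (real DIM('a)) *
          x ^ (DIM('a) - 1)) * indicator {..a} x) \<partial>lborel) =
        ennreal (if a \<ge> 0 then unit_ball_vol (real DIM('a)) * a ^ DIM('a) else 0)"
  proof (cases "a \<ge> 0")
    case True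
    have "(\<integral>\<^sup>+ x. ennreal (indicator {0..} x * (real DIM('a) * unit_ball_vol (real DIM('a)) *
          x ^ (DIM('a) - 1)) * indicator {..a} x) \<partial>lborel)
      = (\<integral>\<^sup>+ x. ennreal (real DIM('a) * unit_ball_vol (real DIM('a)) * x ^ (DIM('a) - 1)) *
          indicator {0..a} x \<partial>lborel)"
      by (intro nn_integral_cong) (auto simp: indicator_def)
    also have "\<dots> = unit_ball_vol (real DIM('a)) * a ^ DIM('a) - unit_ball_vol (real DIM('a)) * 0 ^ DIM('a)"
      by (rule nn_integral_FTC_Icc) (use True in \<open>auto intro!: derivative_eq_intros\<close>)
    finally show ?thesis using True by simp
  next
    case False
    have "(\<integral>\<^sup>+ x. ennreal (indicator {0..} x * (real DIM('a) * unit_ball_vol (real DIM('a)) *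
          x ^ (DIM('a) - 1)) * indicator {..a} x) \<partial>lborel) = (\<integral>\<^sup>+ x. 0 \<partial>(lborel :: real measure))"
      using False by (intro nn_integral_cong) (auto simp: indicator_def)
    then show ?thesis using False by simp
  qed
qed (auto simp: indicator_def)

lemma nn_integral_radial:
  assumes [measurable]: "g \<in> borel_measurable borel"
  shows "(\<integral>\<^sup>+ h. g (norm h) \<partial>(lborel :: ('a::euclidean_space) measure)) =
    (\<integral>\<^sup>+ \<rho>. ennreal (indicator {0..} \<rho> * (real DIM('a) * unit_ball_vol (real DIM('a)) *
      \<rho> ^ (DIM('a) - 1))) * g \<rho> \<partial>lborel)"
  using distributed_nn_integral[OF distributed_norm_lborel[where 'a='a], of g] by simp

lemma nn_integral_lborel_translate:
  fixes g :: "'a::euclidean_space \<Rightarrow> ennreal"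
  assumes [measurable]: "g \<in> borel_measurable borel"
  shows "(\<integral>\<^sup>+ w. g (w - z) \<partial>lborel) = (\<integral>\<^sup>+ h. g h \<partial>lborel)"
proof -
  have "(\<integral>\<^sup>+ w. g (w - z) \<partial>lborel) = (\<integral>\<^sup>+ w. g (w - z) \<partial>distr lborel borel ((+) z))"
    by (simp add: lborel_distr_plus)
  also have "\<dots> = (\<integral>\<^sup>+ h. g h \<partial>lborel)"
    by (subst nn_integral_distr) auto
  finally show ?thesis .
qed

lemma nn_integral_indicator_pair_kernel:
  fixes B :: "'a::euclidean_space set" and H :: "real \<Rightarrow> ennreal"
  assumes [measurable]: "B \<in> sets borel" "H \<in> borel_measurable borel"
  shows "(\<integral>\<^sup>+ z. (\<integral>\<^sup>+ w. (indicator B z + indicator B w) * H (dist z w) \<partial>lborel) \<partial>lborel)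
       = 2 * emeasure lborel B * (\<integral>\<^sup>+ h. H (norm h) \<partial>(lborel :: 'a measure))"
proof -
  define K where "K = (\<integral>\<^sup>+ h. H (norm h) \<partial>(lborel :: 'a measure))"
  have K: "(\<integral>\<^sup>+ w. H (dist z w) \<partial>lborel) = K" "(\<integral>\<^sup>+ w. H (dist w z) \<partial>lborel) = K" for z :: 'a
    using nn_integral_lborel_translate[of "\<lambda>h. H (norm h)" z] unfolding K_def
    by (simp_all add: dist_norm norm_minus_commute)
  have "(\<integral>\<^sup>+ z. (\<integral>\<^sup>+ w. (indicator B z + indicator B w) * H (dist z w) \<partial>lborel) \<partial>lborel)
      = (\<integral>\<^sup>+ z. indicator B z * K + (\<integral>\<^sup>+ w. indicator B w * H (dist z w) \<partial>lborel) \<partial>lborel)"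
    by (intro nn_integral_cong)
      (simp add: distrib_right nn_integral_add nn_integral_cmult K)
  also have "\<dots> = (\<integral>\<^sup>+ z. indicator B z * K \<partial>lborel) +
      (\<integral>\<^sup>+ z. (\<integral>\<^sup>+ w. indicator B w * H (dist z w) \<partial>lborel) \<partial>lborel)"
    by (rule nn_integral_add) auto
  also have "(\<integral>\<^sup>+ z. (\<integral>\<^sup>+ w. indicator B w * H (dist z w) \<partial>lborel) \<partial>lborel)
      = (\<integral>\<^sup>+ w. (\<integral>\<^sup>+ z. indicator B w * H (dist z w) \<partial>lborel) \<partial>lborel)"
    by (rule lborel_pair.Fubini'[symmetric]) measurable
  also have "(\<integral>\<^sup>+ z. indicator B z * K \<partial>lborel) = emeasure lborel B * K"
    by (simp add: nn_integral_multc)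
  also have "(\<integral>\<^sup>+ w. (\<integral>\<^sup>+ z. indicator B w * H (dist z w) \<partial>lborel) \<partial>lborel) = emeasure lborel B * K"
    by (simp add: nn_integral_cmult nn_integral_multc K)
  finally show ?thesis
    by (simp add: K_def mult_2 distrib_right)
qed

lemma nn_integral_young_kernel_le_Lambda:
  assumes young: "young_function \<phi>" and "X > 0"
  shows "(\<integral>\<^sup>+ \<tau>. indicator {0<..} \<tau> *
            ennreal (young_ext \<phi> (min 1 \<tau> * \<tau> powr (- \<alpha>) * X) / \<phi> X / \<tau> ^ (n + 1)) \<partial>lborel)
         \<le> Lambda_lower n \<phi> \<alpha> + Lambda_upper n \<phi> \<alpha>"
proof -
  define k where "k \<tau> = ennreal (young_ext \<phi> (min 1 \<tau> * \<tau> powr (- \<alpha>) * X) / \<phi> X / \<tau> ^ (n + 1))"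
    for \<tau>
  have [measurable]: "k \<in> borel_measurable borel" using young unfolding k_def by measurable
  have "(\<integral>\<^sup>+ \<tau>. indicator {0<..} \<tau> * k \<tau> \<partial>lborel) =
      (\<integral>\<^sup>+ \<tau>. k \<tau> * indicator {0<..1} \<tau> + k \<tau> * indicator {1<..} \<tau> \<partial>lborel)"
    by (intro nn_integral_cong) (auto simp: indicator_def)
  also have "\<dots> = (\<integral>\<^sup>+ \<tau>\<in>{0<..1}. k \<tau> \<partial>lborel) + (\<integral>\<^sup>+ \<tau>\<in>{1<..}. k \<tau> \<partial>lborel)"
    by (rule nn_integral_add) auto
  also have "\<dots> \<le> Lambda_lower n \<phi> \<alpha> + Lambda_upper n \<phi> \<alpha>"
  proof (rule add_mono)
    have "(\<integral>\<^sup>+ \<tau>\<in>{0<..1}. k \<tau> \<partial>lborel) =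
        (\<integral>\<^sup>+ t\<in>{0<..1}. ennreal (\<phi> (t powr (1 - \<alpha>) * X) / \<phi> X / t ^ (n + 1)) \<partial>lborel)"
      using \<open>X > 0\<close> by (intro nn_integral_cong)
        (auto simp: k_def indicator_def powr_diff powr_minus divide_inverse)
    also have "\<dots> \<le> Lambda_lower n \<phi> \<alpha>"
      unfolding Lambda_lower_def by (rule SUP_upper) (use \<open>X > 0\<close> in simp)
    finally show "(\<integral>\<^sup>+ \<tau>\<in>{0<..1}. k \<tau> \<partial>lborel) \<le> Lambda_lower n \<phi> \<alpha>" .
    have "(\<integral>\<^sup>+ \<tau>\<in>{1<..}. k \<tau> \<partial>lborel) \<le>
        (\<integral>\<^sup>+ t\<in>{1..}. ennreal (\<phi> (t powr (- \<alpha>) * X) / \<phi> X / t ^ (n + 1)) \<partial>lborel)"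
      using \<open>X > 0\<close> by (intro nn_integral_mono) (simp add: k_def indicator_def)
    also have "\<dots> \<le> Lambda_upper n \<phi> \<alpha>"
      unfolding Lambda_upper_def by (rule SUP_upper) (use \<open>X > 0\<close> in simp)
    finally show "(\<integral>\<^sup>+ \<tau>\<in>{1<..}. k \<tau> \<partial>lborel) \<le> Lambda_upper n \<phi> \<alpha>" .
  qed
  finally show ?thesis unfolding k_def .
qed

lemma radial_scaling_identity:
  fixes s \<tau> c P :: real and n :: nat
  assumes "s > 0" "\<tau> > 0" "n \<ge> 1"
  shows "s * (c * (s * \<tau>) ^ (n - 1)) * (P / (s * \<tau>) ^ (2 * n)) = c / s ^ n * (P / \<tau> ^ (n + 1))"
proof -
  obtain m where "n = Suc m" using assms by (cases n) auto
  then show ?thesis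
    using assms by (simp add: field_simps mult_2 power_add power_mult power2_eq_square)
qed

lemma nn_integral_radial_kernel_le_Lambda:
  fixes \<phi> :: "real \<Rightarrow> real" and \<alpha> s lam c :: real and n :: nat
  assumes young: "young_function \<phi>" and "s > 0" "lam > 0" "n \<ge> 1" "c \<ge> 0"
  shows "(\<integral>\<^sup>+ \<rho>. ennreal (indicator {0..} \<rho> * (c * \<rho> ^ (n - 1))) *
            ennreal (young_ext \<phi> (min 1 (\<rho> / s) * \<rho> powr (- \<alpha>) / lam) / \<rho> ^ (2 * n)) \<partial>lborel)
         \<le> ennreal (c / s ^ n * \<phi> (s powr (- \<alpha>) / lam)) * (Lambda_lower n \<phi> \<alpha> + Lambda_upper n \<phi> \<alpha>)"
proof -
  define X where "X = s powr (- \<alpha>) / lam"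
  define A where "A = c / s ^ n * \<phi> X"
  define f where "f \<rho> = ennreal (indicator {0..} \<rho> * (c * \<rho> ^ (n - 1))) *
      ennreal (young_ext \<phi> (min 1 (\<rho> / s) * \<rho> powr (- \<alpha>) / lam) / \<rho> ^ (2 * n))" for \<rho>
  define k where "k \<tau> = ennreal (young_ext \<phi> (min 1 \<tau> * \<tau> powr (- \<alpha>) * X) / \<phi> X / \<tau> ^ (n + 1))"
    for \<tau>
  have "X > 0" "\<phi> X > 0" using assms by (simp_all add: X_def young_function_def)
  then have "A \<ge> 0" using assms by (simp add: A_def)
  have [measurable]: "f \<in> borel_measurable borel" using young unfolding f_def by measurable
  have scaled: "ennreal s * f (s * \<tau>) = ennreal A * (indicator {0<..} \<tau> * k \<tau>)" for \<tau>
  proof (cases "\<tau> > 0")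
    case True
    define P where "P = young_ext \<phi> (min 1 \<tau> * \<tau> powr (- \<alpha>) * X)"
    have "P \<ge> 0" unfolding P_def using young_ext_nonneg[OF young] .
    have "min 1 (s * \<tau> / s) * (s * \<tau>) powr (- \<alpha>) / lam = min 1 \<tau> * \<tau> powr (- \<alpha>) * X"
      using \<open>s > 0\<close> True by (simp add: X_def powr_mult)
    then have "ennreal s * f (s * \<tau>) = ennreal (s * (c * (s * \<tau>) ^ (n - 1)) * (P / (s * \<tau>) ^ (2 * n)))"
      using True assms by (simp add: f_def P_def mult.assoc flip: ennreal_mult')
    also have "\<dots> = ennreal (A * (P / \<phi> X / \<tau> ^ (n + 1)))"
      using radial_scaling_identity[OF \<open>s > 0\<close> True \<open>n \<ge> 1\<close>] \<open>\<phi> X > 0\<close> by (simp add: A_def)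
    also have "\<dots> = ennreal A * (indicator {0<..} \<tau> * k \<tau>)"
      using True \<open>A \<ge> 0\<close> \<open>P \<ge> 0\<close> \<open>\<phi> X > 0\<close> by (simp add: k_def P_def flip: ennreal_mult')
    finally show ?thesis .
  next
    case False
    then have "s * \<tau> < 0 \<or> \<tau> = 0" using \<open>s > 0\<close> by (auto simp: mult_pos_neg)
    then show ?thesis
      using False \<open>n \<ge> 1\<close> by (auto simp: f_def indicator_def power_0_left)
  qed
  have "integral\<^sup>N lborel f = ennreal s * (\<integral>\<^sup>+ \<tau>. f (0 + s * \<tau>) \<partial>lborel)"
    using nn_integral_real_affine[of f s 0] \<open>s > 0\<close> by simp
  also have "\<dots> = (\<integral>\<^sup>+ \<tau>. ennreal A * (indicator {0<..} \<tau> * k \<tau>) \<partial>lborel)"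
    by (subst nn_integral_cmult[symmetric]) (simp_all add: scaled)
  also have "\<dots> = ennreal A * (\<integral>\<^sup>+ \<tau>. indicator {0<..} \<tau> * k \<tau> \<partial>lborel)"
    using young by (intro nn_integral_cmult) (simp add: k_def)
  also have "\<dots> \<le> ennreal A * (Lambda_lower n \<phi> \<alpha> + Lambda_upper n \<phi> \<alpha>)"
    unfolding k_def by (intro mult_left_mono nn_integral_young_kernel_le_Lambda young \<open>X > 0\<close>) simp
  finally show ?thesis unfolding f_def A_def X_def .
qed

section \<open>The energy of the cut-off function\<close>

lemma cutoff_eq_clamp:
  assumes "z \<in> \<Omega>" "0 < r" "r < t"
  shows "cutoff \<Omega> x r t z = max 0 (min 1 ((t - dist x z) / (t - r)))"
proof -
  consider "dist x z < r" | "r \<le> dist x z" "dist x z < t" | "t \<le> dist x z" by linarith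
  then show ?thesis
  proof cases
    case 1
    then have "1 \<le> (t - dist x z) / (t - r)" using assms by (simp add: field_simps)
    then show ?thesis using 1 assms by (simp add: cutoff_def)
  next
    case 2
    then have "0 \<le> (t - dist x z) / (t - r)" "(t - dist x z) / (t - r) \<le> 1"
      using assms by (auto simp: field_simps)
    then show ?thesis using 2 assms by (simp add: cutoff_def)
  next
    case 3
    then have "(t - dist x z) / (t - r) \<le> 0" using assms by (simp add: divide_nonpos_pos)
    then show ?thesis using 3 assms by (simp add: cutoff_def)
  qed
qed

lemma abs_clamp_diff_le: "\<bar>max 0 (min 1 a) - max 0 (min 1 b)\<bar> \<le> min 1 \<bar>a - b\<bar>" for a b :: real
  by (simp add: max_def min_def abs_if)

lemma cutoff_diff_le:
  assumes "z \<in> \<Omega>" "w \<in> \<Omega>" "0 < r" "r < t"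
  shows "\<bar>cutoff \<Omega> x r t z - cutoff \<Omega> x r t w\<bar> \<le> min 1 (dist z w / (t - r))"
proof -
  have "\<bar>(t - dist x z) / (t - r) - (t - dist x w) / (t - r)\<bar> = \<bar>dist x w - dist x z\<bar> / (t - r)"
    using assms by (simp add: diff_divide_distrib[symmetric])
  also have "\<dots> \<le> dist z w / (t - r)"
    using assms dist_triangle[of x w z] dist_triangle[of x z w]
    by (intro divide_right_mono) (auto simp: dist_commute)
  finally show ?thesis
    using abs_clamp_diff_le[of "(t - dist x z) / (t - r)" "(t - dist x w) / (t - r)"]
      cutoff_eq_clamp[OF assms(1,3,4)] cutoff_eq_clamp[OF assms(2,3,4)] by simp
qed

lemma cutoff_measurable:
  fixes \<Omega> :: "'a::euclidean_space set"
  assumes "open \<Omega>" "0 < r" "r < t"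
  shows "cutoff \<Omega> x r t \<in> borel_measurable (lebesgue_on \<Omega>)"
proof -
  have "(\<lambda>z. max 0 (min 1 ((t - dist x z) / (t - r)))) \<in> borel_measurable (lebesgue_on \<Omega>)"
    using assms by (intro continuous_imp_measurable_on_sets_lebesgue continuous_intros) auto
  then show ?thesis
    using assms cutoff_eq_clamp[of _ \<Omega> r t x] by (subst measurable_cong) auto
qed

lemma cutoff_energy_density_le:
  fixes \<Omega> :: "'a::euclidean_space set"
  assumes young: "young_function \<phi>" and "z \<in> \<Omega>" "w \<in> \<Omega>" "0 < r" "r < t" "lam > 0"
  shows "ennreal (\<phi> (\<bar>cutoff \<Omega> x r t z - cutoff \<Omega> x r t w\<bar> / (lam * dist z w powr \<alpha>)) /
            dist z w ^ (2 * DIM('a)))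
    \<le> (indicator (\<Omega> \<inter> ball x t) z + indicator (\<Omega> \<inter> ball x t) w) *
       ennreal (young_ext \<phi> (min 1 (dist z w / (t - r)) * dist z w powr (- \<alpha>) / lam) /
         dist z w ^ (2 * DIM('a)))"
proof (cases "z \<noteq> w \<and> (z \<in> ball x t \<or> w \<in> ball x t)")
  case False
  \<comment> \<open>for z = w the left side is a division by 0, hence 0; otherwise u z = u w = 0\<close>
  moreover have "\<phi> 0 = 0" using young by (simp add: young_function_def)
  ultimately show ?thesis using assms by (auto simp: cutoff_def)
next
  case True
  define \<rho> where "\<rho> = dist z w"
  define D where "D = \<bar>cutoff \<Omega> x r t z - cutoff \<Omega> x r t w\<bar>"
  have "\<rho> > 0" using True by (simp add: \<rho>_def)
  have D: "0 \<le> D" "D \<le> min 1 (\<rho> / (t - r))"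
    using cutoff_diff_le[OF assms(2-5)] by (auto simp: D_def \<rho>_def)
  have "D / (lam * \<rho> powr \<alpha>) = D * (\<rho> powr (- \<alpha>) / lam)"
    using \<open>\<rho> > 0\<close> by (simp add: powr_minus field_simps)
  also have "\<dots> \<le> min 1 (\<rho> / (t - r)) * \<rho> powr (- \<alpha>) / lam"
    using D \<open>lam > 0\<close> unfolding times_divide_eq_right by (intro divide_right_mono mult_right_mono) auto
  finally have "\<phi> (D / (lam * \<rho> powr \<alpha>)) \<le> young_ext \<phi> (min 1 (\<rho> / (t - r)) * \<rho> powr (- \<alpha>) / lam)"
    using D assms by (simp add: young_function_mono)
  then have "ennreal (\<phi> (D / (lam * \<rho> powr \<alpha>)) / \<rho> ^ (2 * DIM('a))) \<le>
      1 * ennreal (young_ext \<phi> (min 1 (\<rho> / (t - r)) * \<rho> powr (- \<alpha>) / lam) / \<rho> ^ (2 * DIM('a)))"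
    using \<open>\<rho> > 0\<close> by (simp add: ennreal_leI divide_right_mono)
  also have "\<dots> \<le> (indicator (\<Omega> \<inter> ball x t) z + indicator (\<Omega> \<inter> ball x t) w) *
      ennreal (young_ext \<phi> (min 1 (\<rho> / (t - r)) * \<rho> powr (- \<alpha>) / lam) / \<rho> ^ (2 * DIM('a)))"
    using True assms by (intro mult_right_mono) (auto simp: indicator_def)
  finally show ?thesis unfolding D_def \<rho>_def .
qed

lemma besov_energy_cutoff_le_kernel:
  fixes \<Omega> :: "'a::euclidean_space set"
  assumes young: "young_function \<phi>" and "open \<Omega>" "0 < r" "r < t" "lam > 0"
  shows "besov_energy \<alpha> \<phi> \<Omega> (cutoff \<Omega> x r t) lam \<le> 2 * emeasure lborel (\<Omega> \<inter> ball x t) *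
    (\<integral>\<^sup>+ h. ennreal (young_ext \<phi> (min 1 (norm h / (t - r)) * norm h powr (- \<alpha>) / lam) /
      norm h ^ (2 * DIM('a))) \<partial>(lborel :: 'a measure))"
proof -
  define B where "B = \<Omega> \<inter> ball x t"
  define H where "H \<rho> = ennreal (young_ext \<phi> (min 1 (\<rho> / (t - r)) * \<rho> powr (- \<alpha>) / lam) /
    \<rho> ^ (2 * DIM('a)))" for \<rho>
  have [measurable]: "B \<in> sets borel" "H \<in> borel_measurable borel"
    using assms unfolding B_def H_def by (auto simp: open_Int)
  define E where "E z w = ennreal (\<phi> (\<bar>cutoff \<Omega> x r t z - cutoff \<Omega> x r t w\<bar> /
    (lam * dist z w powr \<alpha>)) / dist z w ^ (2 * DIM('a)))" for z w
  have pointwise: "E z w * indicator \<Omega> w \<le> (indicator B z + indicator B w) * H (dist z w)"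
    if "z \<in> \<Omega>" for z w
    using cutoff_energy_density_le[OF young that _ assms(3-5), of w x \<alpha>]
    by (cases "w \<in> \<Omega>") (simp_all add: E_def B_def H_def)
  have "besov_energy \<alpha> \<phi> \<Omega> (cutoff \<Omega> x r t) lam = (\<integral>\<^sup>+ z\<in>\<Omega>. (\<integral>\<^sup>+ w\<in>\<Omega>. E z w \<partial>lebesgue) \<partial>lebesgue)"
    by (simp add: besov_energy_def E_def)
  also have "\<dots> \<le> (\<integral>\<^sup>+ z. (\<integral>\<^sup>+ w. (indicator B z + indicator B w) * H (dist z w) \<partial>lebesgue) \<partial>lebesgue)"
  proof (rule nn_integral_mono)
    fix z
    show "(\<integral>\<^sup>+ w\<in>\<Omega>. E z w \<partial>lebesgue) * indicator \<Omega> z \<le>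
        (\<integral>\<^sup>+ w. (indicator B z + indicator B w) * H (dist z w) \<partial>lebesgue)"
      using pointwise[of z] by (cases "z \<in> \<Omega>") (auto intro!: nn_integral_mono)
  qed
  also have "\<dots> = (\<integral>\<^sup>+ z. (\<integral>\<^sup>+ w. (indicator B z + indicator B w) * H (dist z w) \<partial>lborel) \<partial>lborel)"
    by (simp add: nn_integral_completion)
  also have "\<dots> = 2 * emeasure lborel B * (\<integral>\<^sup>+ h. H (norm h) \<partial>(lborel :: 'a measure))"
    by (rule nn_integral_indicator_pair_kernel) measurable
  finally show ?thesis unfolding B_def H_def .
qed

lemma besov_energy_cutoff_le:
  fixes \<Omega> :: "'a::euclidean_space set"
  assumes young: "young_function \<phi>" and "open \<Omega>" "0 < r" "r < t" "lam > 0"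
  shows "besov_energy \<alpha> \<phi> \<Omega> (cutoff \<Omega> x r t) lam \<le> 2 * emeasure lborel (\<Omega> \<inter> ball x t) *
    ennreal (DIM('a) * unit_ball_vol DIM('a) / (t - r) ^ DIM('a) * \<phi> ((t - r) powr (- \<alpha>) / lam)) *
    (Lambda_lower DIM('a) \<phi> \<alpha> + Lambda_upper DIM('a) \<phi> \<alpha>)"
proof -
  have "(\<integral>\<^sup>+ h. ennreal (young_ext \<phi> (min 1 (norm h / (t - r)) * norm h powr (- \<alpha>) / lam) /
      norm h ^ (2 * DIM('a))) \<partial>(lborel :: 'a measure)) =
    (\<integral>\<^sup>+ \<rho>. ennreal (indicator {0..} \<rho> * (DIM('a) * unit_ball_vol DIM('a) * \<rho> ^ (DIM('a) - 1))) *
      ennreal (young_ext \<phi> (min 1 (\<rho> / (t - r)) * \<rho> powr (- \<alpha>) / lam) / \<rho> ^ (2 * DIM('a))) \<partial>lborel)"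
    using young by (intro nn_integral_radial) measurable
  also have "\<dots> \<le> ennreal (DIM('a) * unit_ball_vol DIM('a) / (t - r) ^ DIM('a) * \<phi> ((t - r) powr (- \<alpha>) / lam)) *
      (Lambda_lower DIM('a) \<phi> \<alpha> + Lambda_upper DIM('a) \<phi> \<alpha>)"
    using assms by (intro nn_integral_radial_kernel_le_Lambda) auto
  finally show ?thesis
    using besov_energy_cutoff_le_kernel[OF assms, where x=x and \<alpha>=\<alpha>]
    by (auto simp: mult.assoc elim!: order_trans intro!: mult_left_mono)
qed

lemma besov_norm_le:
  assumes "lam > 0" "besov_energy \<alpha> \<phi> \<Omega> u lam \<le> 1"
  shows "besov_norm \<alpha> \<phi> \<Omega> u \<le> lam"
  unfolding besov_norm_def by (rule cInf_lower) (use assms in \<open>auto intro: bdd_belowI[of _ 0]\<close>)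

lemma measure_open_Int_ball_pos:
  fixes \<Omega> :: "'a::euclidean_space set"
  assumes "open \<Omega>" "x \<in> \<Omega>" "t > 0"
  shows "0 < measure lebesgue (\<Omega> \<inter> ball x t)"
proof -
  obtain e where "e > 0" "ball x e \<subseteq> \<Omega> \<inter> ball x t"
    by (rule openE[of "\<Omega> \<inter> ball x t" x]) (use assms in auto)
  have "0 < measure lebesgue (ball x e)"
    using \<open>e > 0\<close> content_ball_pos by (simp add: measure_completion)
  also have "\<dots> \<le> measure lebesgue (\<Omega> \<inter> ball x t)"
    using \<open>ball x e \<subseteq> _\<close> assms
    by (intro measure_mono_fmeasurable) (auto intro!: bounded_set_imp_lmeasurable)
  finally show ?thesis .
qed

lemma emeasure_open_Int_ball:
  fixes \<Omega> :: "'a::euclidean_space set"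
  assumes "open \<Omega>"
  shows "emeasure lborel (\<Omega> \<inter> ball x t) = ennreal (measure lebesgue (\<Omega> \<inter> ball x t))"
proof -
  have "\<Omega> \<inter> ball x t \<in> lmeasurable"
    using assms by (intro bounded_set_imp_lmeasurable) auto
  then have "emeasure lebesgue (\<Omega> \<inter> ball x t) = ennreal (measure lebesgue (\<Omega> \<inter> ball x t))"
    by (rule emeasure_eq_measure2)
  moreover have "emeasure lebesgue (\<Omega> \<inter> ball x t) = emeasure lborel (\<Omega> \<inter> ball x t)"
    using assms by (simp add: open_Int main_part_sets)
  ultimately show ?thesis by simp
qed

lemma besov_energy_cutoff_le_1:
  fixes \<Omega> :: "'a::euclidean_space set"
  assumes young: "young_function \<phi>" and "open \<Omega>" "x \<in> \<Omega>" "0 < r" "r < t"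
    and L: "Lambda_lower DIM('a) \<phi> \<alpha> + Lambda_upper DIM('a) \<phi> \<alpha> = ennreal L" "0 \<le> L"
    and C: "1 \<le> C" "2 * real DIM('a) * unit_ball_vol DIM('a) * L \<le> C"
  defines "lam \<equiv> C * (t - r) powr (- \<alpha>) /
    young_inv \<phi> ((t - r) ^ DIM('a) / measure lebesgue (\<Omega> \<inter> ball x t))"
  shows "0 < lam" "besov_energy \<alpha> \<phi> \<Omega> (cutoff \<Omega> x r t) lam \<le> 1"
proof -
  define s where "s = t - r"
  define \<mu> where "\<mu> = measure lebesgue (\<Omega> \<inter> ball x t)"
  define y where "y = young_inv \<phi> (s ^ DIM('a) / \<mu>)"
  define c where "c = DIM('a) * unit_ball_vol DIM('a)"
  have "s > 0" "c \<ge> 0"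
    using assms by (auto simp: s_def c_def)
  have "\<mu> > 0"
    unfolding \<mu>_def using assms by (intro measure_open_Int_ball_pos) auto
  have "y > 0" "\<phi> y = s ^ DIM('a) / \<mu>"
    using young_inv young_inv_pos young \<open>s > 0\<close> \<open>\<mu> > 0\<close> by (auto simp: y_def)
  have lam: "lam = C * s powr (- \<alpha>) / y"
    by (simp add: lam_def s_def \<mu>_def y_def)
  show "0 < lam"
    using \<open>y > 0\<close> \<open>s > 0\<close> C by (simp add: lam)
  have "\<phi> (s powr (- \<alpha>) / lam) = \<phi> (1 / C * y)"
    using \<open>y > 0\<close> \<open>s > 0\<close> C by (simp add: lam)
  also have "\<dots> \<le> s ^ DIM('a) / (\<mu> * C)"
    using young_function_scale[OF young, of "1 / C" y] \<open>y > 0\<close> \<open>\<phi> y = _\<close> C by (simp add: mult.commute)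
  finally have \<phi>_le: "\<phi> (s powr (- \<alpha>) / lam) \<le> s ^ DIM('a) / (\<mu> * C)" .
  define a where "a = c / s ^ DIM('a) * \<phi> (s powr (- \<alpha>) / lam)"
  have "a \<ge> 0"
    using young_function_nonneg[OF young] \<open>s > 0\<close> \<open>0 < lam\<close> \<open>c \<ge> 0\<close> by (simp add: a_def)
  have "besov_energy \<alpha> \<phi> \<Omega> (cutoff \<Omega> x r t) lam \<le> 2 * ennreal \<mu> * ennreal a * ennreal L"
    using besov_energy_cutoff_le[OF young assms(2,4,5) \<open>0 < lam\<close>, where x=x and \<alpha>=\<alpha>]
      emeasure_open_Int_ball[OF assms(2)] L
    by (simp add: s_def \<mu>_def a_def c_def)
  also have "\<dots> = ennreal (2 * \<mu> * a * L)"
    using \<open>\<mu> > 0\<close> \<open>a \<ge> 0\<close> by (simp add: ennreal_mult')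
  also have "\<dots> \<le> ennreal 1"
  proof (rule ennreal_leI)
    have "2 * \<mu> * a * L \<le> 2 * \<mu> * (c / s ^ DIM('a) * (s ^ DIM('a) / (\<mu> * C))) * L"
      unfolding a_def using \<phi>_le \<open>\<mu> > 0\<close> \<open>s > 0\<close> \<open>c \<ge> 0\<close> L
      by (intro mult_right_mono mult_left_mono) auto
    also have "\<dots> = 2 * c * L / C"
      using \<open>\<mu> > 0\<close> \<open>s > 0\<close> C by (simp add: field_simps)
    also have "\<dots> \<le> 1"
      using C by (simp add: c_def)
    finally show "2 * \<mu> * a * L \<le> 1" .
  qed
  finally show "besov_energy \<alpha> \<phi> \<Omega> (cutoff \<Omega> x r t) lam \<le> 1"
    by simp
qed

theorem lemma2p5:
  fixes \<phi> :: "real \<Rightarrow> real" and \<alpha> :: real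
  assumes dim: "CARD('n::finite) \<ge> 2"
    and alpha: "- real CARD('n) < \<alpha>" "\<alpha> < 0"
    and young: "young_function \<phi>"
    and low: "Lambda_lower CARD('n) \<phi> \<alpha> < \<infinity>"
    and up: "Lambda_upper CARD('n) \<phi> \<alpha> < \<infinity>"
  shows "\<exists>C>0. \<forall>(\<Omega>::(real^'n) set) x r t.
           open \<Omega> \<and> connected \<Omega> \<and> x \<in> \<Omega> \<and> 0 < r \<and> r < t \<and>
           (\<not> bounded \<Omega> \<or> 2 * t < diameter \<Omega>) \<longrightarrow>
           in_besov \<alpha> \<phi> \<Omega> (cutoff \<Omega> x r t) \<and>
           besov_norm \<alpha> \<phi> \<Omega> (cutoff \<Omega> x r t)
             \<le> C * (t - r) powr (- \<alpha>) /
                 young_inv \<phi> ((t - r) ^ CARD('n) / measure lebesgue (\<Omega> \<inter> ball x t))"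
proof -
  obtain L where L: "Lambda_lower DIM(real^'n) \<phi> \<alpha> + Lambda_upper DIM(real^'n) \<phi> \<alpha> = ennreal L" "0 \<le> L"
    using low up by (cases "Lambda_lower CARD('n) \<phi> \<alpha> + Lambda_upper CARD('n) \<phi> \<alpha>" rule: ennreal_cases) auto
  define C where "C = 1 + 2 * real DIM(real^'n) * unit_ball_vol DIM(real^'n) * L"
  have C: "1 \<le> C" "2 * real DIM(real^'n) * unit_ball_vol DIM(real^'n) * L \<le> C"
    using L by (simp_all add: C_def)
  show ?thesis
  proof (intro exI[of _ C] conjI allI impI)
    show "C > 0" using C by simp
    fix \<Omega> :: "(real^'n) set" and x r t
    assume "open \<Omega> \<and> connected \<Omega> \<and> x \<in> \<Omega> \<and> 0 < r \<and> r < t \<and> (\<not> bounded \<Omega> \<or> 2 * t < diameter \<Omega>)"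
    then have \<Omega>: "open \<Omega>" "x \<in> \<Omega>" "0 < r" "r < t" by auto
    note energy = besov_energy_cutoff_le_1[OF young \<Omega> L C]
    show "in_besov \<alpha> \<phi> \<Omega> (cutoff \<Omega> x r t)"
      unfolding in_besov_def using energy cutoff_measurable[OF \<Omega>(1,3,4)] by auto
    show "besov_norm \<alpha> \<phi> \<Omega> (cutoff \<Omega> x r t) \<le> C * (t - r) powr (- \<alpha>) /
        young_inv \<phi> ((t - r) ^ CARD('n) / measure lebesgue (\<Omega> \<inter> ball x t))"
      using besov_norm_le[OF energy] by simp
  qed
qed

end
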